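(* For any composition $\beta$ of an even positive integer, \[\sum_{\substack{\alpha\le\beta\\ a_1,a_k\ \text{odd}}}(-1)^{k_e(\alpha)}\,2^{k_o(\beta)-k_o(\alpha)+1}\,C\bigl(k_o(\alpha)/2-1\bigr)=2^{k_o(\beta)}-\binom{k_o(\beta)}{k_o(\beta)/2},\] where the sum is over those compositions $\alpha=(a_1,\ldots,a_k)$ whose first and last parts are odd and which are refined by $\beta$.
   Context: A composition is a finite sequence of positive integers; $k_e(\alpha)$, $k_o(\alpha)$ are its numbers of even and odd parts. $\alpha\le\beta$ means $\beta$ refines $\alpha$ (obtained from $\alpha$ by splitting parts), including $\alpha=\beta$. $C(j)=\frac{1}{j+1}\binom{2j}{j}$ is the Catalan number. *)

theory Defs
  imports Main
begin

definition is_composition :: "nat list \<Rightarrow> bool" where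
  "is_composition xs \<longleftrightarrow> (\<forall>x\<in>set xs. 0 < x)"

definition k_e :: "nat list \<Rightarrow> nat" where
  "k_e xs = length (filter even xs)"

definition k_o :: "nat list \<Rightarrow> nat" where
  "k_o xs = length (filter odd xs)"

text \<open>refines alpha beta: alpha \<le> beta, i.e. beta refines alpha (beta is obtained
  from alpha by splitting parts, equivalently alpha is obtained from beta by merging
  consecutive blocks of parts); includes alpha = beta.\<close>
definition refines :: "nat list \<Rightarrow> nat list \<Rightarrow> bool" where
  "refines \<alpha> \<beta> \<longleftrightarrow>
     (\<exists>bs. (\<forall>b\<in>set bs. b \<noteq> []) \<and> concat bs = \<beta> \<and> map sum_list bs = \<alpha>)"

definition catalan :: "nat \<Rightarrow> nat" where
  "catalan j = ((2 * j) choose j) div (j + 1)"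

end

theory Submission
  imports Defs
begin

text \<open>
  Call the compositions \<open>\<alpha> \<le> \<beta>\<close> the coarsenings of \<open>\<beta>\<close>. A coarsening of \<open>b # \<beta>\<close>
  either keeps \<open>b\<close> as its own first part or adds \<open>b\<close> to the first part of a coarsening
  of \<open>\<beta>\<close>, so an induction on \<open>\<beta>\<close> has to carry an amount \<open>t\<close> added to the first part.
  With this carry, the signed sum of \<open>(-1)^k_e(\<alpha>) g(k_o(\<alpha>))\<close> over the coarsenings with odd
  last part collapses, for every \<open>g\<close>, to the single term \<open>g(k_o(\<beta>))\<close> if the first part of
  \<open>\<beta>\<close> is odd and to \<open>0\<close> otherwise. Feeding this into the sum over coarsenings with both
  end parts odd gives \<open>g(m) + g(m - 2) + \<dots> + g(2)\<close> for \<open>m = k_o(\<beta>)\<close> even, and for the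
  weight of the theorem this sum telescopes, via \<open>C(l) = binom(2l,l) - binom(2l,l+1)\<close>,
  to \<open>4^(m/2) - binom(m,m/2)\<close>.
\<close>

definition add_hd :: "nat \<Rightarrow> nat list \<Rightarrow> nat list" where
  "add_hd t \<alpha> = (t + hd \<alpha>) # tl \<alpha>"

lemma add_hd_Cons [simp]: "add_hd t (x # xs) = (t + x) # xs"
  by (simp add: add_hd_def)

lemma add_hd_add_hd [simp]: "add_hd t (add_hd s \<alpha>) = add_hd (t + s) \<alpha>"
  by (simp add: add_hd_def)

lemma k_o_Nil [simp]: "k_o [] = 0"
  by (simp add: k_o_def)

lemma k_e_Nil [simp]: "k_e [] = 0"
  by (simp add: k_e_def)

lemma k_o_Cons [simp]: "k_o (x # xs) = (if odd x then 1 else 0) + k_o xs"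
  by (simp add: k_o_def)

lemma k_e_Cons [simp]: "k_e (x # xs) = (if even x then 1 else 0) + k_e xs"
  by (simp add: k_e_def)

lemma even_sum_list_iff_even_k_o: "even (sum_list xs) \<longleftrightarrow> even (k_o xs)"
  by (induction xs) (auto simp: k_o_def)

lemma is_composition_ConsD: "is_composition (x # xs) \<Longrightarrow> is_composition xs"
  by (simp add: is_composition_def)

lemma refines_Nil_iff: "refines \<alpha> \<beta> \<Longrightarrow> \<alpha> = [] \<longleftrightarrow> \<beta> = []"
  unfolding refines_def by auto

lemma refines_singleton_iff: "refines \<alpha> [b] \<longleftrightarrow> \<alpha> = [b]"
proof
  assume "refines \<alpha> [b]"
  then obtain bs where bs: "\<forall>c\<in>set bs. c \<noteq> []" "concat bs = [b]" "map sum_list bs = \<alpha>"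
    unfolding refines_def by blast
  then have "bs = [[b]]"
  proof (cases bs)
    case (Cons c cs)
    with bs show ?thesis by (cases c) auto
  qed simp
  with bs show "\<alpha> = [b]" by simp
next
  assume "\<alpha> = [b]"
  then show "refines \<alpha> [b]" unfolding refines_def by (intro exI[of _ "[[b]]"]) auto
qed

lemma refines_Cons_iff:
  assumes "\<beta> \<noteq> []"
  shows "refines \<alpha> (b # \<beta>) \<longleftrightarrow> (\<exists>\<alpha>'. refines \<alpha>' \<beta> \<and> (\<alpha> = b # \<alpha>' \<or> \<alpha> = add_hd b \<alpha>'))"
proof
  assume "refines \<alpha> (b # \<beta>)"
  then obtain c bs where bs: "\<forall>c\<in>set (c # bs). c \<noteq> []" "concat (c # bs) = b # \<beta>"
      "map sum_list (c # bs) = \<alpha>"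
    unfolding refines_def by (metis concat.simps(1) list.distinct(1) list.exhaust)
  then obtain xs where c: "c = b # xs" and \<beta>: "\<beta> = xs @ concat bs"
    by (cases c) auto
  show "\<exists>\<alpha>'. refines \<alpha>' \<beta> \<and> (\<alpha> = b # \<alpha>' \<or> \<alpha> = add_hd b \<alpha>')"
  proof (cases "xs = []")
    case True
    then have "refines (map sum_list bs) \<beta> \<and> \<alpha> = b # map sum_list bs"
      unfolding refines_def using bs c \<beta> by auto
    then show ?thesis by blast
  next
    case False
    then have "refines (sum_list xs # map sum_list bs) \<beta>"
      unfolding refines_def using bs \<beta> by (intro exI[of _ "xs # bs"]) auto
    moreover have "\<alpha> = add_hd b (sum_list xs # map sum_list bs)"
      using bs c by simp
    ultimately show ?thesis by blast
  qed
next
  assume "\<exists>\<alpha>'. refines \<alpha>' \<beta> \<and> (\<alpha> = b # \<alpha>' \<or> \<alpha> = add_hd b \<alpha>')"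
  then obtain \<alpha>' bs where bs: "\<forall>c\<in>set bs. c \<noteq> []" "concat bs = \<beta>" "map sum_list bs = \<alpha>'"
    and \<alpha>: "\<alpha> = b # \<alpha>' \<or> \<alpha> = add_hd b \<alpha>'"
    unfolding refines_def by blast
  from \<alpha> show "refines \<alpha> (b # \<beta>)"
  proof
    assume "\<alpha> = b # \<alpha>'"
    then show ?thesis unfolding refines_def using bs by (intro exI[of _ "[b] # bs"]) auto
  next
    assume \<alpha>: "\<alpha> = add_hd b \<alpha>'"
    from bs assms obtain c cs where "bs = c # cs" by (cases bs) auto
    with bs \<alpha> show ?thesis unfolding refines_def
      by (intro exI[of _ "(b # c) # cs"]) auto
  qed
qed

lemma coarsenings_Cons:
  "\<beta> \<noteq> [] \<Longrightarrow>
    {\<alpha>. refines \<alpha> (b # \<beta>)} = Cons b ` {\<alpha>. refines \<alpha> \<beta>} \<union> add_hd b ` {\<alpha>. refines \<alpha> \<beta>}"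
  using refines_Cons_iff by auto

lemma finite_coarsenings: "finite {\<alpha>. refines \<alpha> \<beta>}"
proof (induction \<beta>)
  case Nil
  have "{\<alpha>. refines \<alpha> []} \<subseteq> {[]}" by (auto dest: refines_Nil_iff)
  then show ?case by (rule finite_subset) simp
next
  case (Cons b \<beta>)
  then show ?case
    by (cases "\<beta> = []") (simp_all add: refines_singleton_iff coarsenings_Cons)
qed

lemma is_composition_refines:
  assumes "refines \<alpha> \<beta>" "is_composition \<beta>"
  shows "is_composition \<alpha>"
proof -
  obtain bs where bs: "\<forall>c\<in>set bs. c \<noteq> []" "concat bs = \<beta>" "map sum_list bs = \<alpha>"
    using assms(1) unfolding refines_def by blast
  have "0 < sum_list c" if "c \<in> set bs" for c
  proof -
    obtain x xs where c: "c = x # xs" using bs(1) \<open>c \<in> set bs\<close> by (cases c) auto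
    then have "x \<in> set \<beta>" using bs(2) \<open>c \<in> set bs\<close> by force
    with assms(2) c show ?thesis unfolding is_composition_def by auto
  qed
  with bs(3) show ?thesis unfolding is_composition_def by auto
qed

lemma sum_coarsenings_Cons:
  assumes "\<beta> \<noteq> []" "is_composition \<beta>"
  shows "(\<Sum>\<alpha> | refines \<alpha> (b # \<beta>). f \<alpha>) =
    (\<Sum>\<alpha> | refines \<alpha> \<beta>. f (b # \<alpha>)) + (\<Sum>\<alpha> | refines \<alpha> \<beta>. f (add_hd b \<alpha>))"
proof -
  let ?R = "{\<alpha>. refines \<alpha> \<beta>}"
  have "Cons b ` ?R \<inter> add_hd b ` ?R = {}"
  proof -
    have "b # \<alpha> \<noteq> add_hd b \<alpha>'" if "\<alpha>' \<in> ?R" for \<alpha> \<alpha>'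
    proof -
      from that assms obtain x xs where "\<alpha>' = x # xs" "0 < x"
        using refines_Nil_iff is_composition_refines
        by (cases \<alpha>') (auto simp: is_composition_def)
      then show ?thesis by simp
    qed
    then show ?thesis by blast
  qed
  moreover have "inj_on (add_hd b) ?R"
  proof (rule inj_onI)
    fix \<alpha> \<alpha>' assume "\<alpha> \<in> ?R" "\<alpha>' \<in> ?R" "add_hd b \<alpha> = add_hd b \<alpha>'"
    moreover from calculation have "\<alpha> \<noteq> []" "\<alpha>' \<noteq> []"
      using assms(1) refines_Nil_iff by auto
    ultimately show "\<alpha> = \<alpha>'" by (cases \<alpha>; cases \<alpha>') auto
  qed
  ultimately show ?thesis
    unfolding coarsenings_Cons[OF assms(1)]
    by (simp add: sum.union_disjoint finite_coarsenings sum.reindex)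
qed

lemma sum_coarsenings_add_hd_0:
  "\<beta> \<noteq> [] \<Longrightarrow> (\<Sum>\<alpha> | refines \<alpha> \<beta>. f (add_hd 0 \<alpha>)) = (\<Sum>\<alpha> | refines \<alpha> \<beta>. f \<alpha>)"
  by (intro sum.cong refl) (auto simp: add_hd_def dest: refines_Nil_iff)

definition odd_last_weight :: "(nat \<Rightarrow> 'a::comm_ring_1) \<Rightarrow> nat list \<Rightarrow> 'a" where
  "odd_last_weight g \<alpha> = (if odd (last \<alpha>) then (-1) ^ k_e \<alpha> * g (k_o \<alpha>) else 0)"

definition odd_ends_weight :: "(nat \<Rightarrow> 'a::comm_ring_1) \<Rightarrow> nat list \<Rightarrow> 'a" where
  "odd_ends_weight g \<alpha> =
    (if odd (hd \<alpha>) \<and> odd (last \<alpha>) then (-1) ^ k_e \<alpha> * g (k_o \<alpha>) else 0)"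

lemma odd_last_weight_Cons:
  "\<alpha> \<noteq> [] \<Longrightarrow> odd_last_weight g (c # \<alpha>) =
    (if even c then - odd_last_weight g \<alpha> else odd_last_weight (\<lambda>j. g (Suc j)) \<alpha>)"
  by (simp add: odd_last_weight_def)

lemma odd_ends_weight_Cons:
  "\<alpha> \<noteq> [] \<Longrightarrow> odd_ends_weight g (c # \<alpha>) =
    (if even c then 0 else odd_last_weight (\<lambda>j. g (Suc j)) \<alpha>)"
  by (simp add: odd_ends_weight_def odd_last_weight_def)

lemma sum_coarsenings_odd_last_weight:
  fixes g :: "nat \<Rightarrow> 'a::comm_ring_1"
  assumes "\<beta> \<noteq> []" "is_composition \<beta>"
  shows "(\<Sum>\<alpha> | refines \<alpha> \<beta>. odd_last_weight g (add_hd t \<alpha>)) =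
    (if odd (t + hd \<beta>) then g (k_o (add_hd t \<beta>)) else 0)"
  using assms
proof (induction \<beta> arbitrary: t g)
  case Nil
  then show ?case by simp
next
  case (Cons b \<beta>)
  show ?case
  proof (cases "\<beta> = []")
    case True
    then show ?thesis by (simp add: refines_singleton_iff odd_last_weight_def)
  next
    case False
    have \<beta>: "is_composition \<beta>" using Cons.prems(2) by (rule is_composition_ConsD)
    have nonempty: "\<alpha> \<noteq> []" if "refines \<alpha> \<beta>" for \<alpha>
      using that False refines_Nil_iff by blast
    have IH0: "(\<Sum>\<alpha> | refines \<alpha> \<beta>. odd_last_weight h \<alpha>) =
        (if odd (hd \<beta>) then h (k_o \<beta>) else 0)" for h :: "nat \<Rightarrow> 'a"
      using Cons.IH[OF False \<beta>, where t = 0 and g = h] False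
      by (cases \<beta>) (simp_all add: sum_coarsenings_add_hd_0)
    have "(\<Sum>\<alpha> | refines \<alpha> \<beta>. odd_last_weight g ((t + b) # \<alpha>)) =
        (if even (t + b) then - (\<Sum>\<alpha> | refines \<alpha> \<beta>. odd_last_weight g \<alpha>)
         else (\<Sum>\<alpha> | refines \<alpha> \<beta>. odd_last_weight (\<lambda>j. g (Suc j)) \<alpha>))"
      by (auto simp: odd_last_weight_Cons nonempty sum_negf[symmetric] intro!: sum.cong)
    \<comment> \<open>An even carry \<open>t + b\<close> changes no parity, so the two contributions cancel; for an
      odd one exactly one survives, depending on the parity of \<open>hd \<beta>\<close>.\<close>
    then show ?thesis
      unfolding sum_coarsenings_Cons[OF False \<beta>] add_hd_Cons add_hd_add_hd IH0 Cons.IH[OF False \<beta>]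
      using False by (cases \<beta>) auto
  qed
qed

fun sum_same_parity :: "(nat \<Rightarrow> 'a::comm_monoid_add) \<Rightarrow> nat \<Rightarrow> 'a" where
  "sum_same_parity g 0 = 0"
| "sum_same_parity g (Suc 0) = g 1"
| "sum_same_parity g (Suc (Suc m)) = g (Suc (Suc m)) + sum_same_parity g m"

lemma sum_same_parity_even: "sum_same_parity g (2 * n) = (\<Sum>l = 1..n. g (2 * l))"
  by (induction n) (simp_all add: add.commute)

lemma sum_coarsenings_odd_ends_weight:
  fixes g :: "nat \<Rightarrow> 'a::comm_ring_1"
  assumes "\<beta> \<noteq> []" "is_composition \<beta>"
  shows "(\<Sum>\<alpha> | refines \<alpha> \<beta>. odd_ends_weight g (add_hd t \<alpha>)) =
    sum_same_parity g (k_o (add_hd t \<beta>))"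
  using assms
proof (induction \<beta> arbitrary: t)
  case Nil
  then show ?case by simp
next
  case (Cons b \<beta>)
  show ?case
  proof (cases "\<beta> = []")
    case True
    then show ?thesis
      by (simp add: refines_singleton_iff odd_ends_weight_def)
  next
    case False
    have \<beta>: "is_composition \<beta>" using Cons.prems(2) by (rule is_composition_ConsD)
    have nonempty: "\<alpha> \<noteq> []" if "refines \<alpha> \<beta>" for \<alpha>
      using that False refines_Nil_iff by blast
    have "(\<Sum>\<alpha> | refines \<alpha> \<beta>. odd_ends_weight g ((t + b) # \<alpha>)) =
        (if even (t + b) then 0
         else (\<Sum>\<alpha> | refines \<alpha> \<beta>. odd_last_weight (\<lambda>j. g (Suc j)) (add_hd 0 \<alpha>)))"
      by (auto simp: odd_ends_weight_Cons nonempty sum_coarsenings_add_hd_0[OF False])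
    then show ?thesis
      unfolding sum_coarsenings_Cons[OF False \<beta>] add_hd_Cons add_hd_add_hd Cons.IH[OF False \<beta>]
        sum_coarsenings_odd_last_weight[OF False \<beta>]
      using False by (cases \<beta>) auto
  qed
qed

lemma Suc_times_central_binomial_Suc:
  "Suc n * ((2 * n) choose Suc n) = n * ((2 * n) choose n)"
proof (cases n)
  case (Suc k)
  then have "Suc (n + k) = 2 * n" by simp
  then have "Suc n * ((2 * n) choose Suc n) = Suc k * ((2 * n) choose n)"
    using Suc_times_binomial_add[of n k] by (simp only:)
  with Suc show ?thesis by simp
qed simp

lemma catalan_eq_diff_binomial:
  "int (catalan n) = int ((2 * n) choose n) - int ((2 * n) choose Suc n)"
proof -
  define B B' where "B = (2 * n) choose n" and "B' = (2 * n) choose Suc n"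
  have rel: "Suc n * B' = n * B"
    unfolding B_def B'_def by (rule Suc_times_central_binomial_Suc)
  then have "Suc n * B' \<le> Suc n * B" by simp
  then have "B' \<le> B" by (simp only: Suc_mult_le_cancel1)
  with rel have "B = Suc n * (B - B')"
    by (simp add: diff_mult_distrib2)
  then have "B div Suc n = B - B'"
    by (metis nonzero_mult_div_cancel_left nat.distinct(1))
  with \<open>B' \<le> B\<close> show ?thesis
    unfolding catalan_def B_def[symmetric] B'_def[symmetric] by simp
qed

lemma central_binomial_Suc:
  "int ((2 * Suc n) choose Suc n) = 4 * int ((2 * n) choose n) - 2 * int (catalan n)"
proof -
  have "(2 * Suc n) choose Suc n = (Suc (2 * n) choose n) + (Suc (2 * n) choose Suc n)"
    by simp
  moreover have "Suc (2 * n) choose n = Suc (2 * n) choose Suc n"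
    using binomial_symmetric[of n "Suc (2 * n)"] by (simp add: Suc_diff_le)
  moreover have "Suc (2 * n) choose Suc n = ((2 * n) choose n) + ((2 * n) choose Suc n)"
    by simp
  ultimately show ?thesis
    unfolding catalan_eq_diff_binomial by simp
qed

lemma sum_power2_catalan:
  "(\<Sum>l = 1..n. (2::int) ^ (2 * n - 2 * l + 1) * int (catalan (l - 1))) =
    4 ^ n - int ((2 * n) choose n)"
proof (induction n)
  case (Suc n)
  have "(\<Sum>l = 1..Suc n. (2::int) ^ (2 * Suc n - 2 * l + 1) * int (catalan (l - 1))) =
      (\<Sum>l = 1..n. 4 * ((2::int) ^ (2 * n - 2 * l + 1) * int (catalan (l - 1))))
      + 2 * int (catalan n)"
  proof -
    have "(2::int) ^ (2 * Suc n - 2 * l + 1) = 4 * 2 ^ (2 * n - 2 * l + 1)" if "l \<in> {1..n}" for l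
    proof -
      from that have "2 * Suc n - 2 * l + 1 = Suc (Suc (2 * n - 2 * l + 1))" by auto
      then show ?thesis by simp
    qed
    then show ?thesis by (simp add: mult.assoc)
  qed
  also have "\<dots> = 4 * (4 ^ n - int ((2 * n) choose n)) + 2 * int (catalan n)"
    by (simp only: sum_distrib_left[symmetric] Suc.IH)
  finally show ?case
    using central_binomial_Suc[of n] by simp
qed simp

theorem corollary8p6:
  fixes \<beta> :: "nat list"
  assumes "is_composition \<beta>" and "even (sum_list \<beta>)" and "0 < sum_list \<beta>"
  shows "(\<Sum>\<alpha> \<in> {\<alpha>. refines \<alpha> \<beta> \<and> odd (hd \<alpha>) \<and> odd (last \<alpha>)}.
            (-1::int) ^ k_e \<alpha> * 2 ^ (k_o \<beta> - k_o \<alpha> + 1) * int (catalan (k_o \<alpha> div 2 - 1)))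
         = 2 ^ k_o \<beta> - int (k_o \<beta> choose (k_o \<beta> div 2))"
proof -
  obtain n where n: "k_o \<beta> = 2 * n"
    using assms(2) even_sum_list_iff_even_k_o by blast
  have "\<beta> \<noteq> []" using assms(3) by auto
  define g where "g j = (2::int) ^ (k_o \<beta> - j + 1) * int (catalan (j div 2 - 1))" for j
  have "(\<Sum>\<alpha> \<in> {\<alpha>. refines \<alpha> \<beta> \<and> odd (hd \<alpha>) \<and> odd (last \<alpha>)}.
            (-1::int) ^ k_e \<alpha> * 2 ^ (k_o \<beta> - k_o \<alpha> + 1) * int (catalan (k_o \<alpha> div 2 - 1)))
      = (\<Sum>\<alpha> | refines \<alpha> \<beta>. odd_ends_weight g \<alpha>)"
    unfolding odd_ends_weight_def g_def
    by (subst sum.inter_filter[OF finite_coarsenings, symmetric]) (simp add: mult.assoc)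
  also have "\<dots> = (\<Sum>\<alpha> | refines \<alpha> \<beta>. odd_ends_weight g (add_hd 0 \<alpha>))"
    using \<open>\<beta> \<noteq> []\<close> by (rule sum_coarsenings_add_hd_0[symmetric])
  also have "\<dots> = sum_same_parity g (k_o (add_hd 0 \<beta>))"
    using \<open>\<beta> \<noteq> []\<close> assms(1) by (rule sum_coarsenings_odd_ends_weight)
  also have "add_hd 0 \<beta> = \<beta>"
    using \<open>\<beta> \<noteq> []\<close> by (cases \<beta>) simp_all
  also have "sum_same_parity g (k_o \<beta>) =
      (\<Sum>l = 1..n. (2::int) ^ (2 * n - 2 * l + 1) * int (catalan (l - 1)))"
    unfolding n sum_same_parity_even g_def by simp
  also have "\<dots> = 2 ^ k_o \<beta> - int (k_o \<beta> choose (k_o \<beta> div 2))"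
    unfolding sum_power2_catalan n by (simp add: power_mult)
  finally show ?thesis .
qed

end
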